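(* Let $w_0,w_1,p,q$ be integers with $p\equiv 2\pmod 4$, $q\equiv 3\pmod 4$ and $w_0+w_1$ odd, and let $(w_n)_{n\ge0}$ be defined by $w_{n+2}=pw_{n+1}+qw_n$ for all $n\ge0$. Then for all integers $n\ge0$ and $k\ge1$, $$w_{n+2^k}\equiv w_n+2^k\pmod{2^{k+1}}.$$ *)

theory Defs
  imports Main "HOL-Number_Theory.Cong"
begin

end

theory Submission
  imports Defs
begin

text \<open>
  The differences \<open>s\<^sub>k n = w (n + 2^k) - w n\<close> satisfy the same recurrence, and one shows
  by induction on \<open>k\<close> that each \<open>s\<^sub>k n\<close> is \<open>2^k\<close> times an odd number.  For \<open>k = 1\<close>,
  \<open>s\<^sub>1 n = p w (n+1) + (q - 1) w n \<equiv> 2 (w n + w (n+1)) (mod 4)\<close>, and \<open>w n + w (n+1)\<close> stays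
  odd because \<open>p\<close> is even and \<open>q\<close> odd.  If all \<open>s\<^sub>k n\<close> are \<open>2^k\<close> times odd numbers, the
  recurrence with \<open>p \<equiv> q - 1 \<equiv> 2 (mod 4)\<close> gives \<open>s\<^sub>k (n+2) \<equiv> s\<^sub>k n (mod 2^(k+2))\<close>; iterating
  this \<open>2^(k-1)\<close> times, \<open>w (n + 2^(k+1)) - w n = s\<^sub>k (n + 2^k) + s\<^sub>k n \<equiv> 2 s\<^sub>k n (mod 2^(k+2))\<close>.
\<close>

definition linrec :: "int \<Rightarrow> int \<Rightarrow> (nat \<Rightarrow> int) \<Rightarrow> bool" where
  "linrec p q s \<longleftrightarrow> (\<forall>n. s (n + 2) = p * s (n + 1) + q * s n)"

lemma linrec_shift_diff:
  assumes "linrec p q w"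
  shows "linrec p q (\<lambda>n. w (n + m) - w n)"
proof -
  have "w (n + 2) = p * w (n + 1) + q * w n"
    and "w (n + m + 2) = p * w (n + m + 1) + q * w (n + m)" for n
    using assms unfolding linrec_def by blast+
  then show ?thesis
    unfolding linrec_def by (simp add: algebra_simps)
qed

lemma linrec_odd_consecutive_sum:
  assumes "linrec p q w" "even p" "odd q" "odd (w 0 + w 1)"
  shows "odd (w n + w (n + 1))"
proof (induction n)
  case 0
  then show ?case using assms(4) by simp
next
  case (Suc n)
  have "w (Suc n) + w (Suc n + 1) = w (n + 1) + p * w (n + 1) + q * w n"
    using assms(1) unfolding linrec_def by (simp add: add.commute)
  then show ?case using Suc assms(2,3) by auto
qed

lemma cong_two_pow_iff_odd_multiple:
  "[x = 2 ^ k] (mod 2 ^ (k + 1)) \<longleftrightarrow> (\<exists>a. x = 2 ^ k * (1 + 2 * a))" for x :: int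
proof -
  have "x - 2 ^ k = 2 ^ (k + 1) * a \<longleftrightarrow> x = 2 ^ k * (1 + 2 * a)" for a :: int
    by (auto simp: algebra_simps)
  then show ?thesis
    unfolding cong_iff_dvd_diff dvd_def by blast
qed

lemma cong_shift_multiple:
  fixes s :: "nat \<Rightarrow> int" and d j :: nat
  assumes "\<And>n. [s (n + d) = s n] (mod m)"
  shows "[s (n + d * j) = s n] (mod m)"
proof (induction j)
  case 0
  then show ?case by simp
next
  case (Suc j)
  have "[s ((n + d * j) + d) = s (n + d * j)] (mod m)"
    by (rule assms)
  also have "[s (n + d * j) = s n] (mod m)"
    by (rule Suc)
  finally show ?case
    by (simp add: algebra_simps)
qed

lemma linrec_first_difference:
  assumes "linrec p q w" "[p = 2] (mod 4)" "[q = 3] (mod 4)" "odd (w 0 + w 1)"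
  shows "[w (n + 2) - w n = 2] (mod 4)"
proof -
  obtain b where b: "p = 2 + 4 * b"
    using assms(2) by (metis cong_sym cong_iff_lin)
  obtain c where c: "q = 3 + 4 * c"
    using assms(3) by (metis cong_sym cong_iff_lin)
  have "even p" "odd q"
    unfolding b c by simp_all
  then have "odd (w n + w (n + 1))"
    using linrec_odd_consecutive_sum assms(1,4) by blast
  then obtain t where t: "w n + w (n + 1) = 1 + 2 * t" by (metis oddE add.commute)
  have "w (n + 2) - w n = p * w (n + 1) + (q - 1) * w n"
    using assms(1) unfolding linrec_def by (simp add: algebra_simps)
  also have "\<dots> = 2 * (w n + w (n + 1)) + 4 * (b * w (n + 1) + c * w n)"
    unfolding b c by (simp add: algebra_simps)
  also have "\<dots> = 2 + 4 * (t + b * w (n + 1) + c * w n)"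
    unfolding t by (simp add: algebra_simps)
  finally show ?thesis
    unfolding cong_iff_dvd_diff by simp
qed

lemma linrec_two_step_cong:
  assumes "linrec p q s" "[p = 2] (mod 4)" "[q = 3] (mod 4)"
    and exact: "\<And>n. [s n = 2 ^ k] (mod 2 ^ (k + 1))"
  shows "[s (n + 2) = s n] (mod 2 ^ (k + 2))"
proof -
  obtain b where b: "p = 2 + 4 * b"
    using assms(2) by (metis cong_sym cong_iff_lin)
  obtain c where c: "q = 3 + 4 * c"
    using assms(3) by (metis cong_sym cong_iff_lin)
  obtain a1 where a1: "s (n + 1) = 2 ^ k * (1 + 2 * a1)"
    using exact cong_two_pow_iff_odd_multiple by blast
  obtain a0 where a0: "s n = 2 ^ k * (1 + 2 * a0)"
    using exact cong_two_pow_iff_odd_multiple by blast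
  have "s (n + 2) = p * s (n + 1) + q * s n"
    using assms(1) unfolding linrec_def by blast
  then have "s (n + 2) - s n = 2 ^ (k + 2) * (1 + a1 + b + 2 * b * a1 + a0 + c + 2 * c * a0)"
    unfolding a1 a0 b c by (simp add: algebra_simps power_add)
  then show ?thesis
    unfolding cong_iff_dvd_diff by simp
qed

lemma linrec_doubling:
  assumes "linrec p q w" "[p = 2] (mod 4)" "[q = 3] (mod 4)" "k \<ge> 1"
    and IH: "\<And>n. [w (n + 2 ^ k) - w n = 2 ^ k] (mod 2 ^ (k + 1))"
  shows "[w (n + 2 ^ (k + 1)) - w n = 2 ^ (k + 1)] (mod 2 ^ (k + 2))"
proof -
  define s where "s n = w (n + 2 ^ k) - w n" for n
  have "linrec p q s"
    unfolding s_def using linrec_shift_diff[OF assms(1)] by simp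
  then have "[s (n + 2) = s n] (mod 2 ^ (k + 2))" for n
    using linrec_two_step_cong assms(2,3) IH unfolding s_def by blast
  then have "[s (n + 2 * 2 ^ (k - 1)) = s n] (mod 2 ^ (k + 2))"
    by (rule cong_shift_multiple)
  moreover have "2 * 2 ^ (k - 1) = (2::nat) ^ k"
    using \<open>k \<ge> 1\<close> by (simp add: power_eq_if)
  ultimately have period: "[s (n + 2 ^ k) = s n] (mod 2 ^ (k + 2))"
    by simp
  obtain a where a: "s n = 2 ^ k * (1 + 2 * a)"
    using IH cong_two_pow_iff_odd_multiple unfolding s_def by blast
  have "w (n + 2 ^ (k + 1)) - w n = s (n + 2 ^ k) + s n"
    unfolding s_def by (simp add: add.assoc mult_2)
  also have "[\<dots> = s n + s n] (mod 2 ^ (k + 2))"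
    using period by (rule cong_add[OF _ cong_refl])
  also have "s n + s n = 2 ^ (k + 1) * (1 + 2 * a)"
    unfolding a by (simp add: algebra_simps)
  also have "[\<dots> = 2 ^ (k + 1)] (mod 2 ^ (k + 2))"
    using cong_two_pow_iff_odd_multiple[of _ "k + 1"] by auto
  finally show ?thesis .
qed

theorem mainTheorem9:
  fixes w :: "nat \<Rightarrow> int" and p q :: int
  assumes hp: "[p = 2] (mod 4)"
    and hq: "[q = 3] (mod 4)"
    and hodd: "odd (w 0 + w 1)"
    and hrec: "\<And>n. w (n + 2) = p * w (n + 1) + q * w n"
  shows "\<forall>n k. k \<ge> 1 \<longrightarrow> [w (n + 2 ^ k) = w n + 2 ^ k] (mod 2 ^ (k + 1))"
proof (intro allI impI)
  fix n k :: nat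
  assume "k \<ge> 1"
  have rec: "linrec p q w"
    unfolding linrec_def using hrec by blast
  from \<open>k \<ge> 1\<close> have "\<forall>n. [w (n + 2 ^ k) - w n = 2 ^ k] (mod 2 ^ (k + 1))"
  proof (induction k rule: dec_induct)
    case base
    show ?case using linrec_first_difference[OF rec hp hq hodd] by simp
  next
    case (step k)
    then show ?case using linrec_doubling[OF rec hp hq] by simp
  qed
  then have "[w (n + 2 ^ k) - w n = 2 ^ k] (mod 2 ^ (k + 1))" ..
  then show "[w (n + 2 ^ k) = w n + 2 ^ k] (mod 2 ^ (k + 1))"
    unfolding cong_iff_dvd_diff by (simp add: algebra_simps)
qed

end
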